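(* Suppose that for every $y\in\mathcal Y$ the function $\phi(y,\cdot):\mathbb R\to[0,\infty)$ is convex and differentiable with $|\phi'(y,s)-\phi'(y,\tilde s)|\le L|s-\tilde s|$ for all $s,\tilde s\in\mathbb R$ (some $L>0$). Let $(f_t)_{t\in\mathbb N}$ be the online gradient descent iterates with step sizes satisfying $\eta_t\le 1/(6L\kappa^2)$ for all $t\in\mathbb N$, and assume $\mathcal E(f_1)\neq\mathcal E(f_H)$. If $\lim_{t\to\infty}\mathbb E[\mathcal E(f_t)]=\mathcal E(f_H)$, then $\sum_{t=1}^\infty\eta_t=\infty$.
   Context: Setting: Let $\mathcal X\subset\mathbb R^d$, $\mathcal Y\subset\mathbb R$, $\mathcal Z=\mathcal X\times\mathcal Y$, and let $\rho$ be a Borel probability measure on $\mathcal Z$. Let $K:\mathcal X\times\mathcal X\to\mathbb R$ be a continuous, symmetric, positive semi-definite kernel with reproducing kernel Hilbert space $H_K$ (inner product $\langle\cdot,\cdot\rangle$, norm $\|\cdot\|$), $K_x:=K(x,\cdot)$, reproducing property $f(x)=\langle f,K_x\rangle$, and $\kappa:=\sup_{x\in\mathcal X}\sqrt{K(x,x)}<\infty$. Let $\phi:\mathcal Y\times\mathbb R\to[0,\infty)$ be a loss function, differentiable in its second argument, and write $\phi'(y,s)$ for its derivative with respect to $s$. The generalization error of $f:\mathcal X\to\mathbb R$ is $\mathcal E(f)=\int_{\mathcal Z}\phi(y,f(x))\,d\rho(x,y)$. It is assumed that a minimizer $f_H\in\arg\min_{f\in H_K}\mathcal E(f)$ exists and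 that $\max\{\sup_{y\in\mathcal Y}\phi(y,0),\ \sup_{(x,y)\in\mathcal Z}\phi(y,f_H(x))\}<\infty$. Let $z_t=(x_t,y_t)$, $t\in\mathbb N$, be i.i.d. samples from $\rho$, let $(\eta_t)_{t\in\mathbb N}$ be positive step sizes, and define the online gradient descent iterates by $f_1=0$ and $f_{t+1}=f_t-\eta_t\phi'(y_t,f_t(x_t))K_{x_t}$ for $t\in\mathbb N$ (so $f_t$ depends only on $z_1,\dots,z_{t-1}$). *)

theory Defs
  imports "HOL-Probability.Probability"
begin

text \<open>The RKHS H_K is represented through a feature map Phi into a real Hilbert space 'h
  whose image of X spans a dense subspace, with K x x' = inner (Phi x) (Phi x').
  The element h of 'h corresponds to the function x \<mapsto> inner h (Phi x) of H_K,
  and Phi x corresponds to K_x.\<close>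

definition gen_err ::
  "('x \<times> real) measure \<Rightarrow> (real \<Rightarrow> real \<Rightarrow> real) \<Rightarrow> ('x \<Rightarrow> 'h::real_inner) \<Rightarrow> 'h \<Rightarrow> ennreal"
  where "gen_err \<rho> \<phi> \<Phi> h = (\<integral>\<^sup>+ z. ennreal (\<phi> (snd z) (inner h (\<Phi> (fst z)))) \<partial>\<rho>)"

text \<open>Online gradient descent iterates. ogd ... t \<omega> is f_t for t \<ge> 1 (ogd ... 0 \<omega> = 0 is
  an unused dummy); \<omega> t = (x_t, y_t) is the t-th sample (\<omega> 0 unused).
  f_1 = 0,  f_(t+1) = f_t - \<eta>_t \<phi>'(y_t, f_t(x_t)) K_(x_t).\<close>
fun ogd ::
  "(real \<Rightarrow> real \<Rightarrow> real) \<Rightarrow> ('x \<Rightarrow> 'h::real_inner) \<Rightarrow> (nat \<Rightarrow> real) \<Rightarrow> nat \<Rightarrow> (nat \<Rightarrow> 'x \<times> real) \<Rightarrow> 'h"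
  where
    "ogd \<phi> \<Phi> \<eta> 0 \<omega> = 0"
  | "ogd \<phi> \<Phi> \<eta> (Suc t) \<omega> =
       (if t = 0 then 0
        else ogd \<phi> \<Phi> \<eta> t \<omega>
             - (\<eta> t * deriv (\<phi> (snd (\<omega> t))) (inner (ogd \<phi> \<Phi> \<eta> t \<omega>) (\<Phi> (fst (\<omega> t)))))
               *\<^sub>R \<Phi> (fst (\<omega> t)))"

end

theory Submission
  imports Defs
begin

text \<open>
  Convexity of the loss gives \<open>E(f - c K\<^sub>x) \<ge> E(f) - c \<langle>\<nabla>E(f), K\<^sub>x\<rangle>\<close>; since the sample
  \<open>z\<^sub>t\<close> is independent of \<open>f\<^sub>t\<close>, averaging over it turns one step of online gradient descent
  into \<open>E(f\<^sub>t) - \<eta>\<^sub>t \<parallel>\<nabla>E(f\<^sub>t)\<parallel>\<^sup>2\<close>. Nonnegativity and \<open>L\<close>-smoothness of the loss bound the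
  gradient by \<open>\<parallel>\<nabla>E(f)\<parallel>\<^sup>2 \<le> 4L\<kappa>\<^sup>2 (E(f) - E(f\<^sub>H))\<close>, so the expected excess risk contracts by
  at most the factor \<open>1 - 4L\<kappa>\<^sup>2\<eta>\<^sub>t\<close> per step and stays above
  \<open>\<Prod>\<^sub>s (1 - 4L\<kappa>\<^sup>2\<eta>\<^sub>s) (E(f\<^sub>1) - E(f\<^sub>H)) \<ge> exp(-12L\<kappa>\<^sup>2 \<Sum>\<^sub>s \<eta>\<^sub>s) (E(f\<^sub>1) - E(f\<^sub>H))\<close>.
  If the step sizes were summable this bound would be positive, contradicting convergence.
  Here \<open>\<nabla>E(f)\<close> is the Riesz representative of the directional derivative
  \<open>v \<mapsto> \<integral> \<phi>'(y, f(x)) v(x) d\<rho>\<close>.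
\<close>

lemma convex_on_deriv_above_tangent:
  fixes f :: "real \<Rightarrow> real"
  assumes "convex_on UNIV f" and "\<And>s. f differentiable (at s)"
  shows "f s + deriv f s * d \<le> f (s + d)"
proof -
  have "deriv f s * ((s + d) - s) \<le> f (s + d) - f s"
    by (rule convex_on_imp_above_tangent[OF assms(1)])
       (use assms(2) DERIV_deriv_iff_real_differentiable in auto)
  then show ?thesis by simp
qed

lemma lipschitz_deriv_quadratic_upper_bound:
  fixes f :: "real \<Rightarrow> real"
  assumes diff: "\<And>s. f differentiable (at s)"
    and lip: "\<And>s s'. \<bar>deriv f s - deriv f s'\<bar> \<le> L * \<bar>s - s'\<bar>"
  shows "f (s + d) \<le> f s + deriv f s * d + L * d\<^sup>2"
proof -
  have D: "\<And>x. (f has_real_derivative deriv f x) (at x)"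
    using diff DERIV_deriv_iff_real_differentiable by blast
  have L: "0 \<le> L" using lip[of 0 1] by simp
  consider "d = 0" | "d > 0" | "d < 0" by linarith
  then show ?thesis
  proof cases
    case 1 then show ?thesis by simp
  next
    case 2
    obtain z where z: "s < z" "z < s + d" "f (s + d) - f s = (s + d - s) * deriv f z"
      using MVT2[of s "s + d" f "deriv f"] 2 D by auto
    have "(deriv f z - deriv f s) * d \<le> \<bar>deriv f z - deriv f s\<bar> * d"
      using 2 by (intro mult_right_mono) auto
    also have "\<dots> \<le> L * \<bar>z - s\<bar> * d" using lip 2 by (simp add: mult_right_mono)
    also have "\<dots> \<le> L * d * d" using z 2 L by (intro mult_right_mono mult_left_mono) auto
    finally show ?thesis using z by (simp add: power2_eq_square algebra_simps)
  next
    case 3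
    obtain z where z: "s + d < z" "z < s" "f s - f (s + d) = (s - (s + d)) * deriv f z"
      using MVT2[of "s + d" s f "deriv f"] 3 D by auto
    have "(deriv f s - deriv f z) * (- d) \<le> \<bar>deriv f z - deriv f s\<bar> * (- d)"
      using 3 by (intro mult_right_mono) auto
    also have "\<dots> \<le> L * \<bar>z - s\<bar> * (- d)" using lip 3 by (simp add: mult_right_mono)
    also have "\<dots> \<le> L * (- d) * (- d)" using z 3 L by (intro mult_right_mono mult_left_mono) auto
    finally show ?thesis using z by (simp add: power2_eq_square algebra_simps)
  qed
qed

lemma nonneg_lipschitz_deriv_square_le:
  fixes f :: "real \<Rightarrow> real"
  assumes diff: "\<And>s. f differentiable (at s)" and L: "L > 0"
    and lip: "\<And>s s'. \<bar>deriv f s - deriv f s'\<bar> \<le> L * \<bar>s - s'\<bar>"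
    and nonneg: "\<And>s. 0 \<le> f s"
  shows "(deriv f s)\<^sup>2 \<le> 4 * L * f s"
proof -
  let ?g = "deriv f s"
  \<comment> \<open>one gradient step of length \<open>1/(2L)\<close> would decrease \<open>f\<close> by \<open>?g\<^sup>2/(4L)\<close>\<close>
  have "0 \<le> f (s + - ?g / (2 * L))" by (rule nonneg)
  also have "\<dots> \<le> f s + ?g * (- ?g / (2 * L)) + L * (- ?g / (2 * L))\<^sup>2"
    by (rule lipschitz_deriv_quadratic_upper_bound[OF diff lip])
  also have "\<dots> = f s - ?g\<^sup>2 / (4 * L)" using L by (simp add: power2_eq_square field_simps)
  finally show ?thesis using L by (simp add: field_simps)
qed

lemma exp_neg_three_le_one_minus:
  fixes x :: real
  assumes "0 \<le> x" "x \<le> 2/3"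
  shows "exp (- 3 * x) \<le> 1 - x"
proof -
  have "exp (- 3 * x) \<le> 1 / (1 + 3 * x)"
    using exp_ge_add_one_self[of "3 * x"] assms by (simp add: exp_minus field_simps)
  also have "\<dots> \<le> 1 - x"
  proof -
    have "x * (3 * x) \<le> x * 2" using assms by (intro mult_left_mono) auto
    then show ?thesis using assms by (simp add: field_simps)
  qed
  finally show ?thesis .
qed

lemma exp_sum_le_prod_one_minus:
  fixes a :: "nat \<Rightarrow> real"
  assumes a: "\<And>s. s \<ge> 1 \<Longrightarrow> 0 \<le> a s \<and> a s \<le> 2/3" and summable: "summable (\<lambda>s. a (Suc s))"
  shows "exp (- 3 * (\<Sum>s. a (Suc s))) \<le> (\<Prod>s\<in>{1..<t}. 1 - a s)"
proof -
  have "sum a {1..<t} = (\<Sum>s<t - 1. a (Suc s))"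
  proof (cases t)
    case (Suc n)
    then show ?thesis using sum.shift_bounds_Suc_ivl[of a 0 n] by (simp add: atLeast0LessThan)
  qed simp
  also have "\<dots> \<le> (\<Sum>s. a (Suc s))" by (rule sum_le_suminf[OF summable]) (use a in auto)
  finally have "exp (- 3 * (\<Sum>s. a (Suc s))) \<le> exp (- 3 * sum a {1..<t})" by simp
  also have "\<dots> = (\<Prod>s\<in>{1..<t}. exp (- 3 * a s))"
    by (simp add: exp_sum[symmetric] sum_distrib_left)
  also have "\<dots> \<le> (\<Prod>s\<in>{1..<t}. 1 - a s)"
    by (intro prod_mono conjI exp_neg_three_le_one_minus) (use a in auto)
  finally show ?thesis .
qed

lemma ennreal_integral_le_nn_integral:
  fixes f :: "_ \<Rightarrow> real"
  assumes "integrable M f"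
  shows "ennreal (integral\<^sup>L M f) \<le> (\<integral>\<^sup>+ x. ennreal (f x) \<partial>M)"
proof -
  have int: "integrable M (\<lambda>x. max (f x) 0)" using assms by auto
  have "ennreal (integral\<^sup>L M f) \<le> ennreal (\<integral>x. max (f x) 0 \<partial>M)"
    using assms int by (intro ennreal_leI integral_mono) auto
  also have "\<dots> = (\<integral>\<^sup>+ x. ennreal (max (f x) 0) \<partial>M)"
    using int by (subst nn_integral_eq_integral) auto
  also have "\<dots> = (\<integral>\<^sup>+ x. ennreal (f x) \<partial>M)"
    by (intro nn_integral_cong) (simp add: ennreal_max_0)
  finally show ?thesis .
qed

lemma borel_measurable_deriv:
  fixes \<phi> :: "real \<Rightarrow> real \<Rightarrow> real"
  assumes \<phi>: "(\<lambda>(y, s). \<phi> y s) \<in> borel_measurable borel"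
    and f: "f \<in> borel_measurable M" and g: "g \<in> borel_measurable M"
    and diff: "\<And>m. m \<in> space M \<Longrightarrow> \<phi> (f m) differentiable (at (g m))"
  shows "(\<lambda>m. deriv (\<phi> (f m)) (g m)) \<in> borel_measurable M"
proof (rule borel_measurable_LIMSEQ_real)
  have \<phi>': "(\<lambda>p. \<phi> (fst p) (snd p)) \<in> borel_measurable (borel \<Otimes>\<^sub>M borel)"
    using \<phi> by (simp add: borel_prod split_beta')
  have comp: "(\<lambda>m. \<phi> (f m) (a m)) \<in> borel_measurable M" if "a \<in> borel_measurable M" for a
    using measurable_compose[OF measurable_Pair[OF f that] \<phi>'] by simp
  show "(\<lambda>m. (\<phi> (f m) (g m + 1 / Suc i) - \<phi> (f m) (g m)) / (1 / Suc i)) \<in> borel_measurable M"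
    for i by (intro borel_measurable_divide borel_measurable_diff comp g borel_measurable_add) auto
  fix m assume "m \<in> space M"
  then have "(\<phi> (f m) has_real_derivative deriv (\<phi> (f m)) (g m)) (at (g m))"
    using diff DERIV_deriv_iff_real_differentiable by blast
  then have lim: "((\<lambda>h. (\<phi> (f m) (g m + h) - \<phi> (f m) (g m)) / h)
      \<longlongrightarrow> deriv (\<phi> (f m)) (g m)) (at 0)"
    by (simp add: DERIV_def)
  have "(\<lambda>i. 1 / real (Suc i)) \<longlonglongrightarrow> 0"
    using LIMSEQ_inverse_real_of_nat by (simp add: inverse_eq_divide)
  then have seq: "filterlim (\<lambda>i::nat. 1 / real (Suc i)) (at 0) sequentially"
    unfolding filterlim_at by auto
  show "(\<lambda>i. (\<phi> (f m) (g m + 1 / Suc i) - \<phi> (f m) (g m)) / (1 / Suc i))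
      \<longlonglongrightarrow> deriv (\<phi> (f m)) (g m)"
    using filterlim_compose[OF lim seq] by simp
qed

lemma minimizing_sequence_Cauchy:
  fixes J :: "'a::real_normed_vector \<Rightarrow> real"
  assumes parallelogram: "\<And>a b. (norm (a - b))\<^sup>2 = 4 * (J a + J b - 2 * J ((1/2) *\<^sub>R (a + b)))"
    and lower: "\<And>w. j \<le> J w"
    and minimizing: "\<And>n. J (v n) < j + 1 / Suc n"
  shows "Cauchy v"
proof (rule metric_CauchyI)
  fix e :: real assume e: "e > 0"
  obtain N :: nat where N: "8 / e\<^sup>2 < N" using reals_Archimedean2 by blast
  have "N > 0" using N e by (metis gr0I of_nat_0 divide_pos_pos zero_less_numeral zero_less_power
      not_less_iff_gr_or_eq)
  show "\<exists>M. \<forall>m\<ge>M. \<forall>n\<ge>M. dist (v m) (v n) < e"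
  proof (intro exI allI impI)
    fix m n assume mn: "N \<le> m" "N \<le> n"
    have "1 / real (Suc m) \<le> 1 / N" "1 / real (Suc n) \<le> 1 / N"
      using mn \<open>N > 0\<close> by (simp_all add: frac_le)
    then have "(norm (v m - v n))\<^sup>2 < 4 * (1 / N + 1 / N)"
      using parallelogram[of "v m" "v n"] minimizing[of m] minimizing[of n]
        lower[of "(1/2) *\<^sub>R (v m + v n)"] by argo
    also have "\<dots> < e\<^sup>2" using N \<open>N > 0\<close> e by (simp add: field_simps)
    finally show "dist (v m) (v n) < e" using e by (simp add: dist_norm power_less_imp_less_base)
  qed
qed

lemma bounded_linear_energy_has_minimizer:
  fixes l :: "'h::{real_inner, complete_space} \<Rightarrow> real"
  assumes "bounded_linear l"
  shows "\<exists>g. \<forall>w. (norm g)\<^sup>2 / 2 - l g \<le> (norm w)\<^sup>2 / 2 - l w"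
proof -
  interpret bounded_linear l by fact
  obtain C where C: "\<And>v. norm (l v) \<le> norm v * C" using pos_bounded by blast
  define J where "J v = (norm v)\<^sup>2 / 2 - l v" for v
  have "- C\<^sup>2 / 2 \<le> J v" for v
  proof -
    have "l v \<le> norm v * C" using C[of v] by simp
    moreover have "0 \<le> (norm v - C)\<^sup>2" by simp
    ultimately show ?thesis unfolding J_def by (simp add: power2_eq_square algebra_simps)
  qed
  then have bdd: "bdd_below (range J)" by (intro bdd_belowI[of _ "- C\<^sup>2 / 2"]) auto
  define j where "j = Inf (range J)"
  have lower: "j \<le> J w" for w unfolding j_def using bdd by (simp add: cInf_lower)
  have "\<exists>v. J v < j + 1 / Suc n" for n
    using cInf_less_iff[OF _ bdd, of "j + 1 / Suc n"] unfolding j_def by auto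
  then obtain v where v: "\<And>n. J (v n) < j + 1 / Suc n" by metis
  have parallelogram: "(norm (a - b))\<^sup>2 = 4 * (J a + J b - 2 * J ((1/2) *\<^sub>R (a + b)))" for a b
  proof -
    have "(norm (a - b))\<^sup>2 + (norm (a + b))\<^sup>2 = 2 * (norm a)\<^sup>2 + 2 * (norm b)\<^sup>2"
      by (simp add: power2_norm_eq_inner inner_diff inner_add inner_commute)
    moreover have "(norm ((1/2) *\<^sub>R (a + b)))\<^sup>2 = (norm (a + b))\<^sup>2 / 4"
      by (simp add: power2_eq_square)
    moreover have "l ((1/2) *\<^sub>R (a + b)) = (l a + l b) / 2" by (simp add: scaleR add)
    ultimately show ?thesis unfolding J_def by (simp add: algebra_simps)
  qed
  obtain g where g: "v \<longlonglongrightarrow> g"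
    using minimizing_sequence_Cauchy[OF parallelogram lower v] Cauchy_convergent_iff convergent_def
    by blast
  have "J g \<le> J w" for w
  proof (rule LIMSEQ_le)
    show "(\<lambda>n. J (v n)) \<longlonglongrightarrow> J g" unfolding J_def by (intro tendsto_intros g tendsto) auto
    show "(\<lambda>n. J w + 1 / Suc n) \<longlonglongrightarrow> J w"
      using tendsto_add[OF tendsto_const LIMSEQ_Suc[OF lim_inverse_n']] by simp
    show "\<exists>N. \<forall>n\<ge>N. J (v n) \<le> J w + 1 / Suc n"
      using v lower by (meson add_right_mono less_imp_le order_trans)
  qed
  then show ?thesis unfolding J_def by blast
qed

lemma riesz_representation:
  fixes l :: "'h::{real_inner, complete_space} \<Rightarrow> real"
  assumes "bounded_linear l"
  shows "\<exists>g. \<forall>v. l v = inner v g"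
proof -
  interpret bounded_linear l by fact
  obtain g where min: "\<And>w. (norm g)\<^sup>2 / 2 - l g \<le> (norm w)\<^sup>2 / 2 - l w"
    using bounded_linear_energy_has_minimizer[OF assms] by blast
  have "l v = inner v g" for v
  proof -
    define q where "q = inner g v - l v"
    define r where "r = 1 / ((norm v)\<^sup>2 + 1)"
    have "0 < (norm v)\<^sup>2 + 1" by (simp add: add_nonneg_pos)
    then have r: "r > 0" "r * (norm v)\<^sup>2 = 1 - r" unfolding r_def by (simp_all add: field_simps)
    define c where "c = q * r"
    have "(norm g)\<^sup>2 / 2 - l g \<le> (norm (g - c *\<^sub>R v))\<^sup>2 / 2 - l (g - c *\<^sub>R v)"
      by (rule min)
    also have "\<dots> = (norm g)\<^sup>2 / 2 - l g - c * q + c\<^sup>2 * (norm v)\<^sup>2 / 2"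
      unfolding q_def power2_norm_eq_inner
      by (simp add: diff scaleR inner_diff inner_commute power2_eq_square algebra_simps)
         (simp add: field_simps)
    also have "\<dots> = (norm g)\<^sup>2 / 2 - l g - q\<^sup>2 * r + q\<^sup>2 * r * (r * (norm v)\<^sup>2) / 2"
      unfolding c_def by (simp add: power2_eq_square)
    finally have "q\<^sup>2 * r * (1 + r) \<le> 0" unfolding r(2) by (simp add: algebra_simps)
    then have "q = 0" using r(1) by (smt (verit) mult_pos_pos zero_less_power2)
    then show ?thesis unfolding q_def by (simp add: inner_commute)
  qed
  then show ?thesis by blast
qed

lemma continuous_on_feature_map:
  fixes \<Phi> :: "'x::topological_space \<Rightarrow> 'h::real_inner"
  assumes feature: "\<forall>x\<in>X. \<forall>x'\<in>X. K x x' = inner (\<Phi> x) (\<Phi> x')"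
    and cont: "continuous_on (X \<times> X) (\<lambda>(x, x'). K x x')"
  shows "continuous_on X \<Phi>"
  unfolding continuous_on_def
proof
  fix x0 assume x0: "x0 \<in> X"
  \<comment> \<open>\<open>q x\<close> is the squared feature distance \<open>\<parallel>\<Phi> x - \<Phi> x0\<parallel>\<^sup>2\<close>\<close>
  define q where "q x = K x x - 2 * K x x0 + K x0 x0" for x
  have "continuous_on X (\<lambda>x. K x x)"
    by (rule continuous_on_compose2[OF cont, of X "\<lambda>x. (x, x)", simplified])
       (auto intro!: continuous_on_Pair continuous_on_id)
  moreover have "continuous_on X (\<lambda>x. K x x0)"
    by (rule continuous_on_compose2[OF cont, of X "\<lambda>x. (x, x0)", simplified])
       (use x0 in \<open>auto intro!: continuous_on_Pair continuous_on_id continuous_on_const\<close>)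
  ultimately have "continuous_on X q" unfolding q_def by (auto intro!: continuous_intros)
  then have "((\<lambda>x. sqrt (q x)) \<longlongrightarrow> sqrt (q x0)) (at x0 within X)"
    using x0 unfolding continuous_on_def by (blast intro: tendsto_real_sqrt)
  moreover have "\<forall>\<^sub>F x in at x0 within X. sqrt (q x) = norm (\<Phi> x - \<Phi> x0)"
    using feature x0
    by (auto simp: eventually_at_filter q_def norm_eq_sqrt_inner inner_diff inner_commute)
  ultimately have "((\<lambda>x. norm (\<Phi> x - \<Phi> x0)) \<longlongrightarrow> 0) (at x0 within X)"
    using tendsto_cong by (force simp: q_def)
  then show "(\<Phi> \<longlongrightarrow> \<Phi> x0) (at x0 within X)"
    by (simp add: tendsto_norm_zero_iff Lim_null[symmetric])
qed


locale kernel_loss =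
  fixes X :: "'x::topological_space set" and Y :: "real set"
    and \<rho> :: "('x \<times> real) measure"
    and \<Phi> :: "'x \<Rightarrow> 'h::{real_inner, complete_space}"
    and \<phi> :: "real \<Rightarrow> real \<Rightarrow> real" and L \<kappa> B :: real
  assumes prob: "prob_space \<rho>"
    and space_rho: "space \<rho> = X \<times> Y"
    and sets_rho: "sets \<rho> = sets (restrict_space borel (X \<times> Y))"
    and Phi_cont: "continuous_on X \<Phi>"
    and Phi_norm_le: "\<forall>x\<in>X. norm (\<Phi> x) \<le> \<kappa>"
    and kappa_pos: "\<kappa> > 0"
    and phi_meas: "(\<lambda>(y, s). \<phi> y s) \<in> borel_measurable borel"
    and phi_nonneg: "\<forall>y\<in>Y. \<forall>s. 0 \<le> \<phi> y s"
    and phi_diff: "\<forall>y\<in>Y. \<forall>s. \<phi> y differentiable (at s)"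
    and phi_convex: "\<forall>y\<in>Y. convex_on UNIV (\<phi> y)"
    and L_pos: "L > 0"
    and phi_lip: "\<forall>y\<in>Y. \<forall>s s'. \<bar>deriv (\<phi> y) s - deriv (\<phi> y) s'\<bar> \<le> L * \<bar>s - s'\<bar>"
    and phi_zero_le: "\<forall>y\<in>Y. \<phi> y 0 \<le> B"
begin

sublocale P: prob_space \<rho> by (rule prob)

definition pred :: "'h \<Rightarrow> 'x \<times> real \<Rightarrow> real"
  where "pred h z = inner h (\<Phi> (fst z))"

definition slope :: "'h \<Rightarrow> 'x \<times> real \<Rightarrow> real"
  where "slope h z = deriv (\<phi> (snd z)) (pred h z)"

definition risk :: "'h \<Rightarrow> real"
  where "risk h = (\<integral>z. \<phi> (snd z) (pred h z) \<partial>\<rho>)"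

definition risk_deriv :: "'h \<Rightarrow> 'h \<Rightarrow> real"
  where "risk_deriv h v = (\<integral>z. slope h z * inner v (\<Phi> (fst z)) \<partial>\<rho>)"

definition risk_grad :: "'h \<Rightarrow> 'h"
  where "risk_grad h = (SOME g. \<forall>v. risk_deriv h v = inner v g)"

definition slope_zero_bound :: real
  where "slope_zero_bound = sqrt (4 * L * B)"

lemma mem_space_rho: "z \<in> space \<rho> \<Longrightarrow> fst z \<in> X \<and> snd z \<in> Y"
  using space_rho by (metis mem_Times_iff)

lemma loss_diff: "y \<in> Y \<Longrightarrow> \<phi> y differentiable (at s)"
  and loss_lip: "y \<in> Y \<Longrightarrow> \<bar>deriv (\<phi> y) s - deriv (\<phi> y) s'\<bar> \<le> L * \<bar>s - s'\<bar>"
  using phi_diff phi_lip by blast+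

lemma borel_measurable_continuous_on_space:
  fixes f :: "'x \<times> real \<Rightarrow> real"
  shows "continuous_on (X \<times> Y) f \<Longrightarrow> f \<in> borel_measurable \<rho>"
  using borel_measurable_continuous_on_restrict[of "X \<times> Y" f] sets_rho
  by (simp cong: measurable_cong_sets)

lemma borel_measurable_inner_feature: "(\<lambda>z. inner v (\<Phi> (fst z))) \<in> borel_measurable \<rho>"
  by (rule borel_measurable_continuous_on_space)
     (auto intro!: continuous_on_inner continuous_on_const continuous_on_fst continuous_on_id
        continuous_on_compose2[OF Phi_cont])

lemma borel_measurable_label: "snd \<in> borel_measurable \<rho>"
  by (rule borel_measurable_continuous_on_space) (intro continuous_on_snd continuous_on_id)

lemma borel_measurable_loss:
  "f \<in> borel_measurable M \<Longrightarrow> g \<in> borel_measurable M \<Longrightarrow> (\<lambda>m. \<phi> (f m) (g m)) \<in> borel_measurable M"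
proof -
  assume f: "f \<in> borel_measurable M" and g: "g \<in> borel_measurable M"
  have "(\<lambda>p. \<phi> (fst p) (snd p)) \<in> borel_measurable (borel \<Otimes>\<^sub>M borel)"
    using phi_meas by (simp add: borel_prod split_beta')
  from measurable_compose[OF measurable_Pair[OF f g] this] show ?thesis by simp
qed

lemma borel_measurable_slope: "slope h \<in> borel_measurable \<rho>"
  unfolding slope_def pred_def
  by (rule borel_measurable_deriv[OF phi_meas borel_measurable_label borel_measurable_inner_feature])
     (use loss_diff mem_space_rho in blast)

lemma abs_inner_feature_le: "z \<in> space \<rho> \<Longrightarrow> \<bar>inner v (\<Phi> (fst z))\<bar> \<le> norm v * \<kappa>"
  using Cauchy_Schwarz_ineq2[of v "\<Phi> (fst z)"] Phi_norm_le mem_space_rho[of z]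
  by (meson mult_left_mono norm_ge_zero order_trans)

lemma abs_pred_le: "z \<in> space \<rho> \<Longrightarrow> \<bar>pred h z\<bar> \<le> norm h * \<kappa>"
  unfolding pred_def by (rule abs_inner_feature_le)

lemma slope_zero_bound_nonneg: "0 \<le> slope_zero_bound"
  unfolding slope_zero_bound_def using L_pos phi_zero_le phi_nonneg mem_space_rho P.not_empty
  by (metis (no_types, lifting) all_not_in_conv mult_nonneg_nonneg order_trans
      real_sqrt_ge_zero zero_le_numeral less_imp_le)

lemma abs_deriv_loss_zero_le: "y \<in> Y \<Longrightarrow> \<bar>deriv (\<phi> y) 0\<bar> \<le> slope_zero_bound"
proof -
  assume y: "y \<in> Y"
  have "(deriv (\<phi> y) 0)\<^sup>2 \<le> 4 * L * \<phi> y 0"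
    by (rule nonneg_lipschitz_deriv_square_le) (use y loss_diff loss_lip phi_nonneg L_pos in auto)
  also have "\<dots> \<le> 4 * L * B" using phi_zero_le y L_pos by simp
  finally show ?thesis unfolding slope_zero_bound_def by (metis real_sqrt_abs real_sqrt_le_mono)
qed

lemma abs_slope_le: "z \<in> space \<rho> \<Longrightarrow> \<bar>slope h z\<bar> \<le> slope_zero_bound + L * (norm h * \<kappa>)"
proof -
  assume z: "z \<in> space \<rho>"
  then have y: "snd z \<in> Y" using mem_space_rho by simp
  have "\<bar>slope h z\<bar> \<le> \<bar>deriv (\<phi> (snd z)) 0\<bar> + L * \<bar>pred h z\<bar>"
    using loss_lip[OF y, of "pred h z" 0] unfolding slope_def by simp
  also have "\<dots> \<le> slope_zero_bound + L * (norm h * \<kappa>)"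
    using abs_deriv_loss_zero_le[OF y] abs_pred_le[OF z] L_pos by (intro add_mono mult_left_mono) auto
  finally show ?thesis .
qed

lemma slope_bound_nonneg: "0 \<le> slope_zero_bound + L * (norm h * \<kappa>)"
  using slope_zero_bound_nonneg L_pos kappa_pos by simp

lemma abs_loss_le: "z \<in> space \<rho> \<Longrightarrow> \<bar>\<phi> (snd z) s\<bar> \<le> B + slope_zero_bound * \<bar>s\<bar> + L * s\<^sup>2"
proof -
  assume z: "z \<in> space \<rho>"
  then have y: "snd z \<in> Y" using mem_space_rho by simp
  have "\<phi> (snd z) (0 + s) \<le> \<phi> (snd z) 0 + deriv (\<phi> (snd z)) 0 * s + L * s\<^sup>2"
    by (rule lipschitz_deriv_quadratic_upper_bound) (use y loss_diff loss_lip in auto)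
  moreover have "deriv (\<phi> (snd z)) 0 * s \<le> slope_zero_bound * \<bar>s\<bar>"
    using abs_deriv_loss_zero_le[OF y] by (metis abs_ge_self abs_mult abs_ge_zero mult_right_mono order_trans)
  ultimately show ?thesis using phi_zero_le y phi_nonneg by fastforce
qed

lemma integrable_loss: "integrable \<rho> (\<lambda>z. \<phi> (snd z) (pred h z))"
proof (rule P.integrable_const_bound[where B = "B + slope_zero_bound * (norm h * \<kappa>) + L * (norm h * \<kappa>)\<^sup>2"])
  show "(\<lambda>z. \<phi> (snd z) (pred h z)) \<in> borel_measurable \<rho>"
    unfolding pred_def by (rule borel_measurable_loss[OF borel_measurable_label borel_measurable_inner_feature])
  show "AE z in \<rho>. norm (\<phi> (snd z) (pred h z)) \<le> B + slope_zero_bound * (norm h * \<kappa>) + L * (norm h * \<kappa>)\<^sup>2"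
  proof (rule AE_I2)
    fix z assume z: "z \<in> space \<rho>"
    have "(pred h z)\<^sup>2 \<le> (norm h * \<kappa>)\<^sup>2"
      using abs_pred_le[OF z] by (metis abs_le_square_iff abs_of_nonneg mult_nonneg_nonneg
          norm_ge_zero kappa_pos less_imp_le)
    then have "B + slope_zero_bound * \<bar>pred h z\<bar> + L * (pred h z)\<^sup>2
        \<le> B + slope_zero_bound * (norm h * \<kappa>) + L * (norm h * \<kappa>)\<^sup>2"
      using abs_pred_le[OF z] slope_zero_bound_nonneg L_pos
      by (intro add_mono mult_left_mono order_refl) auto
    then show "norm (\<phi> (snd z) (pred h z)) \<le> B + slope_zero_bound * (norm h * \<kappa>) + L * (norm h * \<kappa>)\<^sup>2"
      using abs_loss_le[OF z, of "pred h z"] by simp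
  qed
qed

lemma gen_err_eq_risk: "gen_err \<rho> \<phi> \<Phi> h = ennreal (risk h)"
  unfolding gen_err_def risk_def
  using integrable_loss[of h] phi_nonneg mem_space_rho
  by (subst nn_integral_eq_integral) (auto simp: pred_def)

lemma risk_nonneg: "0 \<le> risk h"
  unfolding risk_def using phi_nonneg mem_space_rho by (intro integral_nonneg_AE) auto

lemma integrable_slope_inner: "integrable \<rho> (\<lambda>z. slope h z * inner v (\<Phi> (fst z)))"
proof (rule P.integrable_const_bound[where B = "(slope_zero_bound + L * (norm h * \<kappa>)) * (norm v * \<kappa>)"])
  show "(\<lambda>z. slope h z * inner v (\<Phi> (fst z))) \<in> borel_measurable \<rho>"
    using borel_measurable_slope borel_measurable_inner_feature by measurable
  show "AE z in \<rho>. norm (slope h z * inner v (\<Phi> (fst z))) \<le> (slope_zero_bound + L * (norm h * \<kappa>)) * (norm v * \<kappa>)"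
    using abs_slope_le abs_inner_feature_le slope_bound_nonneg
    by (intro AE_I2) (auto simp: abs_mult intro!: mult_mono)
qed

lemma bounded_linear_risk_deriv: "bounded_linear (risk_deriv h)"
proof (rule bounded_linear_intro)
  show "risk_deriv h (v + w) = risk_deriv h v + risk_deriv h w" for v w
    unfolding risk_deriv_def by (simp add: inner_add_left distrib_left integrable_slope_inner)
  show "risk_deriv h (r *\<^sub>R v) = r *\<^sub>R risk_deriv h v" for r v
    unfolding risk_deriv_def by (simp add: algebra_simps)
  show "norm (risk_deriv h v) \<le> norm v * ((slope_zero_bound + L * (norm h * \<kappa>)) * \<kappa>)" for v
  proof -
    have "norm (risk_deriv h v) \<le> (\<integral>z. norm (slope h z * inner v (\<Phi> (fst z))) \<partial>\<rho>)"
      unfolding risk_deriv_def by (rule integral_norm_bound)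
    also have "\<dots> \<le> (\<integral>z. (slope_zero_bound + L * (norm h * \<kappa>)) * (norm v * \<kappa>) \<partial>\<rho>)"
      using abs_slope_le abs_inner_feature_le slope_bound_nonneg
      by (intro integral_mono integrable_norm integrable_slope_inner)
         (auto simp: abs_mult intro!: mult_mono)
    finally show ?thesis by (simp add: algebra_simps P.prob_space)
  qed
qed

lemma risk_deriv_eq_inner_grad: "risk_deriv h v = inner v (risk_grad h)"
  using someI_ex[OF riesz_representation[OF bounded_linear_risk_deriv[of h]]]
  unfolding risk_grad_def by blast

lemma risk_deriv_grad: "risk_deriv h (risk_grad h) = (norm (risk_grad h))\<^sup>2"
  by (simp add: risk_deriv_eq_inner_grad power2_norm_eq_inner)

lemma integral_loss_plus_deriv:
  "(\<integral>z. \<phi> (snd z) (pred h z) + slope h z * inner v (\<Phi> (fst z)) + e \<partial>\<rho>)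
    = risk h + risk_deriv h v + e"
  unfolding risk_def risk_deriv_def
  by (simp add: integrable_loss integrable_slope_inner P.prob_space)

lemma risk_above_tangent: "risk h + risk_deriv h v \<le> risk (h + v)"
proof -
  have "risk h + risk_deriv h v + 0
      = (\<integral>z. \<phi> (snd z) (pred h z) + slope h z * inner v (\<Phi> (fst z)) + 0 \<partial>\<rho>)"
    by (rule integral_loss_plus_deriv[symmetric])
  also have "\<dots> \<le> risk (h + v)"
    unfolding risk_def
  proof (intro integral_mono AE_I2 integrable_loss Bochner_Integration.integrable_add integrable_slope_inner)
    fix z assume "z \<in> space \<rho>"
    then have "snd z \<in> Y" using mem_space_rho by simp
    then show "\<phi> (snd z) (pred h z) + slope h z * inner v (\<Phi> (fst z)) + 0 \<le> \<phi> (snd z) (pred (h + v) z)"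
      using convex_on_deriv_above_tangent[of "\<phi> (snd z)"] phi_convex loss_diff
      by (simp add: slope_def pred_def inner_add_left)
  qed simp
  finally show ?thesis by simp
qed

lemma risk_descent: "risk (h + v) \<le> risk h + risk_deriv h v + L * \<kappa>\<^sup>2 * (norm v)\<^sup>2"
proof -
  have "risk (h + v) \<le> (\<integral>z. \<phi> (snd z) (pred h z) + slope h z * inner v (\<Phi> (fst z)) + L * \<kappa>\<^sup>2 * (norm v)\<^sup>2 \<partial>\<rho>)"
    unfolding risk_def
  proof (intro integral_mono AE_I2 integrable_loss Bochner_Integration.integrable_add integrable_slope_inner)
    fix z assume z: "z \<in> space \<rho>"
    then have y: "snd z \<in> Y" using mem_space_rho by simp
    let ?d = "inner v (\<Phi> (fst z))"
    have "?d\<^sup>2 \<le> (norm v * \<kappa>)\<^sup>2"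
      using abs_inner_feature_le[OF z, of v] by (metis abs_ge_zero abs_le_square_iff abs_of_nonneg order_trans)
    then have "L * ?d\<^sup>2 \<le> L * \<kappa>\<^sup>2 * (norm v)\<^sup>2"
      using L_pos by (simp add: power_mult_distrib algebra_simps)
    moreover have "\<phi> (snd z) (pred h z + ?d) \<le> \<phi> (snd z) (pred h z) + slope h z * ?d + L * ?d\<^sup>2"
      unfolding slope_def by (rule lipschitz_deriv_quadratic_upper_bound) (use y loss_diff loss_lip in auto)
    ultimately show "\<phi> (snd z) (pred (h + v) z) \<le> \<phi> (snd z) (pred h z) + slope h z * ?d + L * \<kappa>\<^sup>2 * (norm v)\<^sup>2"
      by (simp add: pred_def inner_add_left)
  qed simp
  also have "\<dots> = risk h + risk_deriv h v + L * \<kappa>\<^sup>2 * (norm v)\<^sup>2"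
    by (rule integral_loss_plus_deriv)
  finally show ?thesis .
qed

lemma norm_risk_grad_square_le:
  assumes min: "\<And>h'. risk h\<^sub>H \<le> risk h'"
  shows "(norm (risk_grad h))\<^sup>2 \<le> 4 * L * \<kappa>\<^sup>2 * (risk h - risk h\<^sub>H)"
proof -
  define g where "g = risk_grad h"
  define \<gamma> where "\<gamma> = 1 / (2 * L * \<kappa>\<^sup>2)"
  have "risk h\<^sub>H \<le> risk (h + (- \<gamma>) *\<^sub>R g)" by (rule min)
  also have "\<dots> \<le> risk h + risk_deriv h ((- \<gamma>) *\<^sub>R g) + L * \<kappa>\<^sup>2 * (norm ((- \<gamma>) *\<^sub>R g))\<^sup>2"
    by (rule risk_descent)
  also have "\<dots> = risk h - (norm g)\<^sup>2 / (4 * L * \<kappa>\<^sup>2)"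
    unfolding risk_deriv_eq_inner_grad g_def \<gamma>_def using L_pos kappa_pos
    by (simp add: dot_square_norm power2_eq_square field_simps)
  finally show ?thesis unfolding g_def using L_pos kappa_pos by (simp add: field_simps)
qed

lemma risk_step_nn_integral_lower:
  assumes min: "\<And>h'. risk h\<^sub>H \<le> risk h'" and "0 \<le> \<eta>"
  shows "ennreal ((1 - 4 * L * \<kappa>\<^sup>2 * \<eta>) * risk h + 4 * L * \<kappa>\<^sup>2 * \<eta> * risk h\<^sub>H)
     \<le> (\<integral>\<^sup>+ z. gen_err \<rho> \<phi> \<Phi> (h - (\<eta> * slope h z) *\<^sub>R \<Phi> (fst z)) \<partial>\<rho>)"
proof -
  define g where "g = risk_grad h"
  define w where "w z = risk h - \<eta> * (slope h z * inner g (\<Phi> (fst z)))" for z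
  have int_w: "integrable \<rho> w"
    unfolding w_def by (intro Bochner_Integration.integrable_diff integrable_mult_right integrable_slope_inner) auto
  have "(1 - 4 * L * \<kappa>\<^sup>2 * \<eta>) * risk h + 4 * L * \<kappa>\<^sup>2 * \<eta> * risk h\<^sub>H \<le> risk h - \<eta> * (norm g)\<^sup>2"
    using mult_left_mono[OF norm_risk_grad_square_le[OF min, of h] \<open>0 \<le> \<eta>\<close>]
    unfolding g_def by (simp add: algebra_simps)
  also have "\<dots> = integral\<^sup>L \<rho> w"
    using risk_deriv_grad[of h] unfolding w_def g_def risk_deriv_def
    by (simp add: integrable_slope_inner P.prob_space)
  finally have "ennreal ((1 - 4 * L * \<kappa>\<^sup>2 * \<eta>) * risk h + 4 * L * \<kappa>\<^sup>2 * \<eta> * risk h\<^sub>H) \<le> ennreal (integral\<^sup>L \<rho> w)"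
    by (rule ennreal_leI)
  also have "\<dots> \<le> (\<integral>\<^sup>+ z. ennreal (w z) \<partial>\<rho>)" by (rule ennreal_integral_le_nn_integral[OF int_w])
  also have "\<dots> \<le> (\<integral>\<^sup>+ z. gen_err \<rho> \<phi> \<Phi> (h - (\<eta> * slope h z) *\<^sub>R \<Phi> (fst z)) \<partial>\<rho>)"
  proof (intro nn_integral_mono)
    fix z
    have "w z = risk h + risk_deriv h ((- (\<eta> * slope h z)) *\<^sub>R \<Phi> (fst z))"
      unfolding w_def g_def risk_deriv_eq_inner_grad by (simp add: inner_commute)
    also have "\<dots> \<le> risk (h - (\<eta> * slope h z) *\<^sub>R \<Phi> (fst z))"
      using risk_above_tangent[of h "- ((\<eta> * slope h z) *\<^sub>R \<Phi> (fst z))"] by simp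
    finally show "ennreal (w z) \<le> gen_err \<rho> \<phi> \<Phi> (h - (\<eta> * slope h z) *\<^sub>R \<Phi> (fst z))"
      unfolding gen_err_eq_risk by (rule ennreal_leI)
  qed
  finally show ?thesis .
qed

end

locale kernel_ogd = kernel_loss X Y \<rho> \<Phi> \<phi> L \<kappa> B
  for X :: "'x::second_countable_topology set" and Y \<rho>
    and \<Phi> :: "'x \<Rightarrow> 'h::{real_inner, complete_space}" and \<phi> L \<kappa> B +
  fixes \<eta> :: "nat \<Rightarrow> real"
begin

abbreviation samples :: "(nat \<Rightarrow> 'x \<times> real) measure"
  where "samples \<equiv> PiM UNIV (\<lambda>_. \<rho>)"

definition expected_risk :: "nat \<Rightarrow> ennreal"
  where "expected_risk t = (\<integral>\<^sup>+ \<omega>. gen_err \<rho> \<phi> \<Phi> (ogd \<phi> \<Phi> \<eta> t \<omega>) \<partial>samples)"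

lemma prob_space_samples: "prob_space samples"
  by (rule prob_space_PiM) (rule prob)

lemma borel_measurable_kernel:
  assumes a: "a \<in> measurable N \<rho>" and b: "b \<in> measurable N \<rho>"
  shows "(\<lambda>p. inner (\<Phi> (fst (a p))) (\<Phi> (fst (b p)))) \<in> borel_measurable N"
proof -
  have "fst \<in> measurable (restrict_space borel (X \<times> Y)) (borel :: 'x measure)"
    by (rule borel_measurable_continuous_on_restrict) (intro continuous_on_fst continuous_on_id)
  then have fst_meas: "fst \<in> measurable \<rho> borel" using sets_rho by (simp cong: measurable_cong_sets)
  have pair: "(\<lambda>p. (fst (a p), fst (b p))) \<in> measurable N (restrict_space borel (X \<times> X))"
  proof (rule measurable_restrict_space2)
    show "(\<lambda>p. (fst (a p), fst (b p))) \<in> space N \<rightarrow> X \<times> X"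
      using measurable_space[OF a] measurable_space[OF b] mem_space_rho by auto
    have "(\<lambda>p. (fst (a p), fst (b p))) \<in> measurable N (borel \<Otimes>\<^sub>M borel)"
      by (intro measurable_Pair measurable_compose[OF a fst_meas] measurable_compose[OF b fst_meas])
    then show "(\<lambda>p. (fst (a p), fst (b p))) \<in> measurable N borel" by (simp add: borel_prod)
  qed
  have kernel: "(\<lambda>q. inner (\<Phi> (fst q)) (\<Phi> (snd q))) \<in> borel_measurable (restrict_space borel (X \<times> X))"
    by (rule borel_measurable_continuous_on_restrict)
       (auto intro!: continuous_on_inner continuous_on_compose2[OF Phi_cont] continuous_on_fst
         continuous_on_snd continuous_on_id)
  from measurable_compose[OF pair kernel] show ?thesis by simp
qed

lemma measurable_sample: "(\<lambda>p. fst p i) \<in> measurable (samples \<Otimes>\<^sub>M \<rho>) \<rho>"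
  by (rule measurable_compose[OF measurable_fst measurable_component_singleton]) simp

lemma borel_measurable_pred_ogd:
  "(\<lambda>p. inner (ogd \<phi> \<Phi> \<eta> t (fst p)) (\<Phi> (fst (snd p)))) \<in> borel_measurable (samples \<Otimes>\<^sub>M \<rho>)"
proof (induction t)
  case (Suc t)
  let ?V = "\<lambda>p. inner (ogd \<phi> \<Phi> \<eta> t (fst p)) (\<Phi> (fst (snd p)))"
  have shift: "(\<lambda>p. (fst p, fst p t)) \<in> measurable (samples \<Otimes>\<^sub>M \<rho>) (samples \<Otimes>\<^sub>M \<rho>)"
    by (intro measurable_Pair measurable_fst measurable_sample)
  have V: "(\<lambda>p. ?V (fst p, fst p t)) \<in> borel_measurable (samples \<Otimes>\<^sub>M \<rho>)"
    using measurable_compose[OF shift Suc.IH] by simp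
  have label: "(\<lambda>p. snd (fst p t)) \<in> borel_measurable (samples \<Otimes>\<^sub>M \<rho>)"
    using measurable_compose[OF measurable_sample borel_measurable_label] by simp
  have slope: "(\<lambda>p. deriv (\<phi> (snd (fst p t))) (?V (fst p, fst p t))) \<in> borel_measurable (samples \<Otimes>\<^sub>M \<rho>)"
  proof (rule borel_measurable_deriv[OF phi_meas label V])
    fix p assume "p \<in> space (samples \<Otimes>\<^sub>M \<rho>)"
    then have "fst p t \<in> space \<rho>" by (auto simp: space_pair_measure space_PiM)
    then show "\<phi> (snd (fst p t)) differentiable (at (?V (fst p, fst p t)))"
      using mem_space_rho loss_diff by blast
  qed
  have kernel: "(\<lambda>p. inner (\<Phi> (fst (fst p t))) (\<Phi> (fst (snd p)))) \<in> borel_measurable (samples \<Otimes>\<^sub>M \<rho>)"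
    by (rule borel_measurable_kernel[OF measurable_sample measurable_snd])
  show ?case
  proof (cases "t = 0")
    case False
    then have step: "inner (ogd \<phi> \<Phi> \<eta> (Suc t) (fst p)) (\<Phi> (fst (snd p))) = ?V p
        - \<eta> t * deriv (\<phi> (snd (fst p t))) (?V (fst p, fst p t)) * inner (\<Phi> (fst (fst p t))) (\<Phi> (fst (snd p)))"
      for p by (simp add: inner_diff_left)
    show ?thesis unfolding step using Suc.IH slope kernel by measurable
  qed simp
qed simp

lemma borel_measurable_gen_err_ogd: "(\<lambda>\<omega>. gen_err \<rho> \<phi> \<Phi> (ogd \<phi> \<Phi> \<eta> t \<omega>)) \<in> borel_measurable samples"
  unfolding gen_err_def
proof (rule P.borel_measurable_nn_integral)
  have "(\<lambda>p. \<phi> (snd (snd p)) (inner (ogd \<phi> \<Phi> \<eta> t (fst p)) (\<Phi> (fst (snd p)))))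
      \<in> borel_measurable (samples \<Otimes>\<^sub>M \<rho>)"
    by (rule borel_measurable_loss[OF measurable_compose[OF measurable_snd borel_measurable_label]
          borel_measurable_pred_ogd])
  then show "(\<lambda>(\<omega>, z). ennreal (\<phi> (snd z) (inner (ogd \<phi> \<Phi> \<eta> t \<omega>) (\<Phi> (fst z)))))
      \<in> borel_measurable (samples \<Otimes>\<^sub>M \<rho>)"
    by (simp add: split_beta')
qed

lemma ogd_cong: "(\<And>s. s < t \<Longrightarrow> \<omega> s = \<omega>' s) \<Longrightarrow> ogd \<phi> \<Phi> \<eta> t \<omega> = ogd \<phi> \<Phi> \<eta> t \<omega>'"
  by (induction t) auto

lemma ogd_Suc_fun_upd:
  assumes "t \<noteq> 0"
  shows "ogd \<phi> \<Phi> \<eta> (Suc t) (fun_upd \<omega> t z) = ogd \<phi> \<Phi> \<eta> t \<omega> - (\<eta> t * slope (ogd \<phi> \<Phi> \<eta> t \<omega>) z) *\<^sub>R \<Phi> (fst z)"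
proof -
  have "ogd \<phi> \<Phi> \<eta> t (fun_upd \<omega> t z) = ogd \<phi> \<Phi> \<eta> t \<omega>" by (rule ogd_cong) auto
  then show ?thesis using assms by (simp add: slope_def pred_def)
qed

lemma expected_risk_Suc_lower:
  assumes min: "\<And>h'. risk h\<^sub>H \<le> risk h'" and t: "t \<noteq> 0"
    and \<eta>: "0 \<le> \<eta> t" "4 * L * \<kappa>\<^sup>2 * \<eta> t \<le> 1"
  shows "ennreal (1 - 4 * L * \<kappa>\<^sup>2 * \<eta> t) * expected_risk t + ennreal (4 * L * \<kappa>\<^sup>2 * \<eta> t * risk h\<^sub>H)
    \<le> expected_risk (Suc t)"
proof -
  interpret PP: pair_sigma_finite \<rho> samples
    by (simp add: pair_sigma_finite_def P.sigma_finite_measure prob_space_imp_sigma_finite[OF prob_space_samples])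
  let ?G = "\<lambda>\<omega>. gen_err \<rho> \<phi> \<Phi> (ogd \<phi> \<Phi> \<eta> (Suc t) \<omega>)"
  let ?u = "\<lambda>p::('x \<times> real) \<times> (nat \<Rightarrow> 'x \<times> real). fun_upd (snd p) t (fst p)"
  let ?a = "1 - 4 * L * \<kappa>\<^sup>2 * \<eta> t" and ?b = "4 * L * \<kappa>\<^sup>2 * \<eta> t * risk h\<^sub>H"
  have u: "?u \<in> measurable (\<rho> \<Otimes>\<^sub>M samples) samples"
    by (rule measurable_fun_upd[where J = UNIV]) auto
  \<comment> \<open>resampling the \<open>t\<close>-th coordinate does not change the product measure\<close>
  have distr: "distr (\<rho> \<Otimes>\<^sub>M samples) samples ?u = samples"
    using distr_pair_PiM_eq_PiM[of UNIV "\<lambda>_. \<rho>" t] prob by (simp add: split_beta')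
  have "ennreal ?a * expected_risk t + ennreal ?b
      = (\<integral>\<^sup>+ \<omega>. ennreal ?a * gen_err \<rho> \<phi> \<Phi> (ogd \<phi> \<Phi> \<eta> t \<omega>) + ennreal ?b \<partial>samples)"
    unfolding expected_risk_def using borel_measurable_gen_err_ogd
    by (subst nn_integral_add) (auto simp: nn_integral_cmult prob_space.emeasure_space_1[OF prob_space_samples])
  also have "\<dots> = (\<integral>\<^sup>+ \<omega>. ennreal (?a * risk (ogd \<phi> \<Phi> \<eta> t \<omega>) + ?b) \<partial>samples)"
    using \<eta> L_pos risk_nonneg
    by (intro nn_integral_cong) (simp add: gen_err_eq_risk ennreal_plus ennreal_mult)
  also have "\<dots> \<le> (\<integral>\<^sup>+ \<omega>. (\<integral>\<^sup>+ z. ?G (fun_upd \<omega> t z) \<partial>\<rho>) \<partial>samples)"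
    unfolding ogd_Suc_fun_upd[OF t]
    by (intro nn_integral_mono risk_step_nn_integral_lower[OF min \<eta>(1)])
  also have "\<dots> = (\<integral>\<^sup>+ p. ?G (?u p) \<partial>(\<rho> \<Otimes>\<^sub>M samples))"
    using PP.nn_integral_snd[of "\<lambda>p. ?G (?u p)"] measurable_compose[OF u borel_measurable_gen_err_ogd]
    by (simp del: ogd.simps)
  also have "\<dots> = integral\<^sup>N (distr (\<rho> \<Otimes>\<^sub>M samples) samples ?u) ?G"
    using nn_integral_distr[OF u] borel_measurable_gen_err_ogd unfolding distr by (simp del: ogd.simps)
  also have "\<dots> = expected_risk (Suc t)"
    unfolding distr expected_risk_def ..
  finally show ?thesis .
qed

lemma expected_risk_lower_prod:
  assumes min: "\<And>h'. risk h\<^sub>H \<le> risk h'"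
    and \<eta>: "\<And>t. t \<ge> 1 \<Longrightarrow> 0 \<le> \<eta> t \<and> 4 * L * \<kappa>\<^sup>2 * \<eta> t \<le> 1"
    and "t \<ge> 1"
  shows "ennreal (risk h\<^sub>H + (\<Prod>s\<in>{1..<t}. 1 - 4 * L * \<kappa>\<^sup>2 * \<eta> s) * (risk 0 - risk h\<^sub>H)) \<le> expected_risk t"
  using \<open>t \<ge> 1\<close>
proof (induction t rule: nat_induct_at_least)
  case base
  show ?case
    by (simp add: expected_risk_def gen_err_eq_risk prob_space.emeasure_space_1[OF prob_space_samples])
next
  case (Suc t)
  define c where "c = 4 * L * \<kappa>\<^sup>2 * \<eta> t"
  define P where "P = (\<Prod>s\<in>{1..<t}. 1 - 4 * L * \<kappa>\<^sup>2 * \<eta> s)"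
  have c: "0 \<le> c" "c \<le> 1" using \<eta>[of t] Suc L_pos unfolding c_def by auto
  have "0 \<le> P" unfolding P_def using \<eta> by (intro prod_nonneg) auto
  then have excess: "0 \<le> risk h\<^sub>H + P * (risk 0 - risk h\<^sub>H)"
    using min[of 0] risk_nonneg by simp
  have "risk h\<^sub>H + P * (1 - c) * (risk 0 - risk h\<^sub>H)
      = (1 - c) * (risk h\<^sub>H + P * (risk 0 - risk h\<^sub>H)) + c * risk h\<^sub>H"
    by (simp add: algebra_simps)
  then have "ennreal (risk h\<^sub>H + P * (1 - c) * (risk 0 - risk h\<^sub>H))
      = ennreal (1 - c) * ennreal (risk h\<^sub>H + P * (risk 0 - risk h\<^sub>H)) + ennreal (c * risk h\<^sub>H)"
    using c excess risk_nonneg[of h\<^sub>H] by (simp add: ennreal_mult ennreal_plus)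
  also have "\<dots> \<le> ennreal (1 - c) * expected_risk t + ennreal (c * risk h\<^sub>H)"
    using Suc.IH unfolding P_def by (intro add_mono mult_left_mono) auto
  also have "\<dots> \<le> expected_risk (Suc t)"
    unfolding c_def using Suc \<eta>[of t] by (intro expected_risk_Suc_lower[OF min]) auto
  finally show ?case using Suc.hyps by (simp add: P_def c_def prod.atLeastLessThan_Suc)
qed

lemma not_summable_step_sizes:
  assumes min: "\<And>h'. risk h\<^sub>H \<le> risk h'"
    and \<eta>: "\<And>t. t \<ge> 1 \<Longrightarrow> 0 \<le> \<eta> t \<and> \<eta> t * (6 * L * \<kappa>\<^sup>2) \<le> 1"
    and start: "risk 0 \<noteq> risk h\<^sub>H"
    and conv: "expected_risk \<longlonglongrightarrow> ennreal (risk h\<^sub>H)"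
  shows "\<not> summable (\<lambda>t. \<eta> (Suc t))"
proof
  assume summable: "summable (\<lambda>t. \<eta> (Suc t))"
  define c where "c = 4 * L * \<kappa>\<^sup>2"
  have c: "0 < c" unfolding c_def using L_pos kappa_pos by simp
  have c\<eta>: "0 \<le> c * \<eta> t \<and> c * \<eta> t \<le> 2/3" if "t \<ge> 1" for t
  proof
    show "0 \<le> c * \<eta> t" using \<eta>[OF that] c by simp
    show "c * \<eta> t \<le> 2/3" using \<eta>[OF that] unfolding c_def by (simp add: field_simps)
  qed
  have \<eta>': "0 \<le> \<eta> t \<and> 4 * L * \<kappa>\<^sup>2 * \<eta> t \<le> 1" if "t \<ge> 1" for t
    using \<eta>[OF that] c\<eta>[OF that] unfolding c_def by linarith
  define p where "p = exp (- 3 * (\<Sum>t. c * \<eta> (Suc t)))"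
  have p: "p \<le> (\<Prod>s\<in>{1..<t}. 1 - c * \<eta> s)" for t
    unfolding p_def by (rule exp_sum_le_prod_one_minus[OF c\<eta> summable_mult[OF summable]])
  have excess: "0 < risk 0 - risk h\<^sub>H" using min[of 0] start by simp
  have "ennreal (risk h\<^sub>H + p * (risk 0 - risk h\<^sub>H)) \<le> ennreal (risk h\<^sub>H)"
  proof (rule LIMSEQ_le_const[OF conv], intro exI allI impI)
    fix t :: nat assume "1 \<le> t"
    have "ennreal (risk h\<^sub>H + p * (risk 0 - risk h\<^sub>H))
        \<le> ennreal (risk h\<^sub>H + (\<Prod>s\<in>{1..<t}. 1 - c * \<eta> s) * (risk 0 - risk h\<^sub>H))"
      using p excess by (intro ennreal_leI add_left_mono mult_right_mono) auto
    also have "\<dots> \<le> expected_risk t"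
      using expected_risk_lower_prod[OF min \<eta>' \<open>1 \<le> t\<close>] by (simp add: c_def)
    finally show "ennreal (risk h\<^sub>H + p * (risk 0 - risk h\<^sub>H)) \<le> expected_risk t" .
  qed
  then have "p * (risk 0 - risk h\<^sub>H) \<le> 0" using risk_nonneg by (simp add: ennreal_le_iff)
  moreover have "0 < p" unfolding p_def by simp
  ultimately show False using excess by (simp add: mult_le_0_iff)
qed

end

lemma norm_feature_le_SUP:
  assumes feature: "\<forall>x\<in>X. \<forall>x'\<in>X. K x x' = inner (\<Phi> x) (\<Phi> x')"
    and bdd: "bdd_above ((\<lambda>x. sqrt (K x x)) ` X)" and x: "x \<in> X"
  shows "norm (\<Phi> x) \<le> (SUP x\<in>X. sqrt (K x x))"
  using cSUP_upper[OF x bdd] feature x by (simp add: norm_eq_sqrt_inner)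

lemma norm_bound_pos_of_dense_span:
  fixes \<Phi> :: "'x \<Rightarrow> 'h::real_normed_vector" and v :: 'h
  assumes dense: "closure (span (\<Phi> ` X)) = UNIV" and "v \<noteq> 0"
    and le: "\<forall>x\<in>X. norm (\<Phi> x) \<le> \<kappa>"
  shows "\<kappa> > 0"
proof (rule ccontr)
  assume "\<not> \<kappa> > 0"
  have "norm (\<Phi> x) \<le> 0" if "x \<in> X" for x
    using le[rule_format, OF that] \<open>\<not> \<kappa> > 0\<close> by linarith
  then have "\<Phi> ` X \<subseteq> {0}" by auto
  then have "span (\<Phi> ` X) \<subseteq> {0}" by (metis span_mono span_empty span_insert_0)
  then have "closure (span (\<Phi> ` X)) \<subseteq> {0}" by (metis closure_minimal closed_singleton)
  then show False using dense \<open>v \<noteq> 0\<close> by blast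
qed

theorem theorem2:
  fixes X :: "(real ^ 'd) set" and Y :: "real set"
    and \<rho> :: "((real ^ 'd) \<times> real) measure"
    and K :: "real ^ 'd \<Rightarrow> real ^ 'd \<Rightarrow> real"
    and \<Phi> :: "real ^ 'd \<Rightarrow> 'h::{real_inner, complete_space}"
    and \<phi> :: "real \<Rightarrow> real \<Rightarrow> real"
    and \<eta> :: "nat \<Rightarrow> real" and L :: real and hH :: 'h
  assumes rho_prob: "prob_space \<rho>"
    and rho_space: "space \<rho> = X \<times> Y"
    and rho_sets: "sets \<rho> = sets (restrict_space borel (X \<times> Y))"
    and K_feature: "\<forall>x\<in>X. \<forall>x'\<in>X. K x x' = inner (\<Phi> x) (\<Phi> x')"
    and Phi_dense: "closure (span (\<Phi> ` X)) = UNIV"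
    and K_cont: "continuous_on (X \<times> X) (\<lambda>(x, x'). K x x')"
    and kappa_fin: "bdd_above ((\<lambda>x. sqrt (K x x)) ` X)"
    and phi_meas: "(\<lambda>(y, s). \<phi> y s) \<in> borel_measurable borel"
    and phi_nonneg: "\<forall>y\<in>Y. \<forall>s. 0 \<le> \<phi> y s"
    and phi_diff: "\<forall>y\<in>Y. \<forall>s. \<phi> y differentiable (at s)"
    and phi_convex: "\<forall>y\<in>Y. convex_on UNIV (\<phi> y)"
    and L_pos: "L > 0"
    and phi_lip: "\<forall>y\<in>Y. \<forall>s s'. \<bar>deriv (\<phi> y) s - deriv (\<phi> y) s'\<bar> \<le> L * \<bar>s - s'\<bar>"
    and hH_min: "\<forall>h. gen_err \<rho> \<phi> \<Phi> hH \<le> gen_err \<rho> \<phi> \<Phi> h"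
    and phi_bdd: "\<exists>B. (\<forall>y\<in>Y. \<phi> y 0 \<le> B) \<and> (\<forall>x\<in>X. \<forall>y\<in>Y. \<phi> y (inner hH (\<Phi> x)) \<le> B)"
    and eta_pos: "\<forall>t\<ge>1. \<eta> t > 0"
    and eta_le: "\<forall>t\<ge>1. \<eta> t * (6 * L * (SUP x\<in>X. sqrt (K x x))\<^sup>2) \<le> 1"
    and err_ne: "gen_err \<rho> \<phi> \<Phi> 0 \<noteq> gen_err \<rho> \<phi> \<Phi> hH"
    and conv: "(\<lambda>t. \<integral>\<^sup>+ \<omega>. gen_err \<rho> \<phi> \<Phi> (ogd \<phi> \<Phi> \<eta> t \<omega>) \<partial>(PiM UNIV (\<lambda>_::nat. \<rho>)))
               \<longlonglongrightarrow> gen_err \<rho> \<phi> \<Phi> hH"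
  shows "\<not> summable (\<lambda>t. \<eta> (Suc t))"
proof -
  define \<kappa> where "\<kappa> = (SUP x\<in>X. sqrt (K x x))"
  obtain B where B: "\<forall>y\<in>Y. \<phi> y 0 \<le> B" using phi_bdd by blast
  have Phi_le: "\<forall>x\<in>X. norm (\<Phi> x) \<le> \<kappa>"
    unfolding \<kappa>_def using norm_feature_le_SUP[OF K_feature kappa_fin] by blast
  have "hH \<noteq> 0" using err_ne by (cases "hH = 0") simp_all
  then have "\<kappa> > 0" by (rule norm_bound_pos_of_dense_span[OF Phi_dense _ Phi_le])
  interpret kernel_ogd X Y \<rho> \<Phi> \<phi> L \<kappa> B \<eta>
    using kernel_loss.intro[OF rho_prob rho_space rho_sets continuous_on_feature_map[OF K_feature K_cont]
        Phi_le \<open>\<kappa> > 0\<close> phi_meas phi_nonneg phi_diff phi_convex L_pos phi_lip B]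
    by intro_locales
  show ?thesis
  proof (rule not_summable_step_sizes)
    show "risk hH \<le> risk h'" for h'
      using hH_min risk_nonneg by (simp add: gen_err_eq_risk ennreal_le_iff)
    show "0 \<le> \<eta> t \<and> \<eta> t * (6 * L * \<kappa>\<^sup>2) \<le> 1" if "t \<ge> 1" for t
      using eta_pos eta_le that unfolding \<kappa>_def by (auto intro: less_imp_le)
    show "risk 0 \<noteq> risk hH" using err_ne gen_err_eq_risk by metis
    show "expected_risk \<longlonglongrightarrow> ennreal (risk hH)"
      using conv by (simp add: expected_risk_def[abs_def] gen_err_eq_risk)
  qed
qed

end
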